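(* Let $t=t(z)$ denote the unique formal power series in $z$ (in fact a power series in $z^3$) with zero constant term satisfying $z^3=t(1-t)^2$; thus $t=z^3+2z^6+\cdots$. Then for every $k\ge 0$, \[ f_k(z)=\frac{t^k}{z^k(1-t)}\qquad\text{and}\qquad g_k(z)=\frac{t^{k+1}}{z^{k+2}}, \] where the right-hand sides are interpreted as formal power series in $z$ (they are, since $t/z^3$ is a power series with constant term $1$).
   Context: An S-Motzkin path is a lattice path from $(0,0)$ using up steps $u=(1,1)$, horizontal steps $h=(1,0)$ and down steps $d=(1,-1)$, never going below the $x$-axis, ending on the $x$-axis, such that after deleting the down steps the remaining word is $huhu\cdots hu$. Partial S-Motzkin paths are their prefixes. The numbers $a_{n,k}$ (resp. $b_{n,k}$), $n,k\ge0$, count partial S-Motzkin paths of length $n$ ending at height $k$ whose last non-down step is an up step (resp. a horizontal step); equivalently they are defined by $a_{0,0}=1$, $b_{0,0}=0$, $a_{0,k}=b_{0,k}=0$ for $k\ge1$, and for $n\ge1$, $k\ge0$: $a_{n,k}=b_{n-1,k-1}+a_{n-1,k+1}$, $b_{n,k}=a_{n-1,k}+b_{n-1,k+1}$, with $b_{n-1,-1}=0$. Generating functions: $f_k(z)=\sum_{n\ge0}a_{n,k}z^n$, $g_k(z)=\sum_{n\ge0}b_{n,k}z^n$. *)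

theory Defs
  imports "HOL-Computational_Algebra.Formal_Power_Series"
begin

text \<open>Counting numbers a_{n,k}, b_{n,k} of partial S-Motzkin paths, via the recurrences
  (with the convention b_{n-1,-1} = 0).\<close>

fun smotz_a :: "nat \<Rightarrow> nat \<Rightarrow> nat" and smotz_b :: "nat \<Rightarrow> nat \<Rightarrow> nat" where
  "smotz_a 0 k = (if k = 0 then 1 else 0)"
| "smotz_b 0 k = 0"
| "smotz_a (Suc n) k = (if k = 0 then 0 else smotz_b n (k - 1)) + smotz_a n (Suc k)"
| "smotz_b (Suc n) k = smotz_a n k + smotz_b n (Suc k)"

definition smotz_f :: "nat \<Rightarrow> rat fps" where
  "smotz_f k = Abs_fps (\<lambda>n. of_nat (smotz_a n k))"

definition smotz_g :: "nat \<Rightarrow> rat fps" where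
  "smotz_g k = Abs_fps (\<lambda>n. of_nat (smotz_b n k))"

end

theory Submission
  imports Defs
begin

text \<open>Read coefficientwise, the recurrences for a(n,k) and b(n,k) say that the generating
  functions are the unique solution of the system
  f(k) = [k = 0] + z g(k-1) + z f(k+1),  g(k) = z f(k) + z g(k+1).
  With s = t/z^3, which satisfies s (1 - t)^2 = 1, the series f(k) = z^(2k) s^(k+1) (1 - t) and
  g(k) = z^(2k+1) s^(k+1) solve it: after cancelling common factors the first equation reads
  s (1 - t) = 1 + t s (1 - t), i.e. s (1 - t)^2 = 1, and the second reads 1 = (1 - t) + t.
  Multiplying by the denominators then gives f(k) z^k (1 - t) = t^k and g(k) z^(k+2) = t^(k+1).\<close>

lemma smotz_coeffs_of_recurrences:
  fixes F G :: "nat \<Rightarrow> 'a::comm_semiring_1 fps"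
  assumes F_rec: "\<And>k. F k = (if k = 0 then 1 else fps_X * G (k - 1)) + fps_X * F (Suc k)"
    and G_rec: "\<And>k. G k = fps_X * F k + fps_X * G (Suc k)"
  shows "fps_nth (F k) n = of_nat (smotz_a n k) \<and> fps_nth (G k) n = of_nat (smotz_b n k)"
proof (induction n arbitrary: k)
  case 0
  show ?case by (subst F_rec, subst G_rec) simp
next
  case (Suc n)
  have "fps_nth (F k) (Suc n) = of_nat (smotz_a (Suc n) k)"
    using Suc.IH by (subst F_rec) (cases k; simp)
  moreover have "fps_nth (G k) (Suc n) = of_nat (smotz_b (Suc n) k)"
    using Suc.IH by (subst G_rec) simp
  ultimately show ?case ..
qed

lemma smotz_f_g_eqI:
  fixes F G :: "nat \<Rightarrow> rat fps"
  assumes "\<And>k. F k = (if k = 0 then 1 else fps_X * G (k - 1)) + fps_X * F (Suc k)"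
    and "\<And>k. G k = fps_X * F k + fps_X * G (Suc k)"
  shows "smotz_f k = F k" and "smotz_g k = G k"
  using smotz_coeffs_of_recurrences[OF assms]
  by (simp_all add: smotz_f_def smotz_g_def fps_eq_iff)

lemma fps_X_cube_quotient_exists:
  fixes t :: "'a::field fps"
  assumes "fps_nth t 0 = 0" and "fps_X^3 = t * (1 - t)^2"
  obtains s where "s * (1 - t)^2 = 1" and "t = fps_X^3 * s"
proof
  define s where "s = inverse ((1 - t)^2)"
  show s_inv: "s * (1 - t)^2 = 1"
    unfolding s_def using assms(1) by (intro inverse_mult_eq_1) (simp add: power2_eq_square)
  show "t = fps_X^3 * s"
    using assms(2) s_inv by (metis mult.assoc mult.commute mult_1_right)
qed

lemma smotz_f_g_closed_form:
  fixes s t :: "rat fps"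
  assumes s_inv: "s * (1 - t)^2 = 1" and t_eq: "t = fps_X^3 * s"
  shows "smotz_f k = fps_X^(2*k) * s^(k+1) * (1 - t)"
    and "smotz_g k = fps_X^(2*k+1) * s^(k+1)"
proof -
  have key: "s * (1 - t) = 1 + fps_X^3 * s^2 * (1 - t)"
  proof -
    have "s * (1 - t) - t * s * (1 - t) = s * (1 - t)^2"
      by (simp add: algebra_simps power2_eq_square)
    then show ?thesis
      using s_inv t_eq by (simp add: algebra_simps power2_eq_square)
  qed
  define F where "F k = fps_X^(2*k) * s^(k+1) * (1 - t)" for k
  define G where "G k = fps_X^(2*k+1) * s^(k+1)" for k
  have F_rec: "F k = (if k = 0 then 1 else fps_X * G (k - 1)) + fps_X * F (Suc k)" for k
  proof (cases k)
    case 0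
    then show ?thesis
      using key by (simp add: F_def eval_nat_numeral mult_ac)
  next
    case (Suc m)
    have "F k = fps_X * G m * (s * (1 - t))"
      by (simp add: F_def G_def Suc mult_ac)
    also have "\<dots> = fps_X * G m + fps_X * G m * (fps_X^3 * s^2 * (1 - t))"
      unfolding key by (simp add: distrib_left)
    also have "\<dots> = fps_X * G m + fps_X * F (Suc k)"
      by (simp add: F_def G_def Suc power_add mult_ac eval_nat_numeral)
    finally show ?thesis using Suc by simp
  qed
  have G_rec: "G k = fps_X * F k + fps_X * G (Suc k)" for k
  proof -
    have "fps_X * F k + fps_X * G (Suc k) = fps_X^(2*k+1) * s^(k+1) * ((1 - t) + fps_X^3 * s)"
      by (simp add: F_def G_def algebra_simps eval_nat_numeral)
    then show ?thesis by (simp add: G_def t_eq)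
  qed
  show "smotz_f k = fps_X^(2*k) * s^(k+1) * (1 - t)"
    using smotz_f_g_eqI(1)[OF F_rec G_rec] by (simp add: F_def)
  show "smotz_g k = fps_X^(2*k+1) * s^(k+1)"
    using smotz_f_g_eqI(2)[OF F_rec G_rec] by (simp add: G_def)
qed

lemma power_three_split:
  fixes x :: "'a::monoid_mult"
  shows "x^(2*k) * x^k = (x^3)^k"
    and "x^(2*k+1) * x^(k+2) = (x^3)^(k+1)"
proof -
  have "2*k + k = 3*k" by simp
  then show "x^(2*k) * x^k = (x^3)^k"
    by (subst power_add[symmetric]) (simp only: power_mult)
  have "2*k+1 + (k+2) = 3*(k+1)" by simp
  then show "x^(2*k+1) * x^(k+2) = (x^3)^(k+1)"
    by (subst power_add[symmetric]) (simp only: power_mult)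
qed

lemma smotz_f_g_mult_denominators:
  fixes s t :: "rat fps"
  assumes s_inv: "s * (1 - t)^2 = 1" and t_eq: "t = fps_X^3 * s"
  shows "smotz_f k * (fps_X^k * (1 - t)) = t^k"
    and "smotz_g k * fps_X^(k+2) = t^(k+1)"
proof -
  have "smotz_f k * (fps_X^k * (1 - t)) = (fps_X^(2*k) * fps_X^k) * s^k * (s * (1 - t)^2)"
    by (simp add: smotz_f_g_closed_form(1)[OF assms] power2_eq_square mult_ac)
  also have "\<dots> = t^k"
    unfolding s_inv power_three_split(1) by (simp add: t_eq power_mult_distrib)
  finally show "smotz_f k * (fps_X^k * (1 - t)) = t^k" .
  have "smotz_g k * fps_X^(k+2) = (fps_X^(2*k+1) * fps_X^(k+2)) * s^(k+1)"
    by (simp add: smotz_f_g_closed_form(2)[OF assms] mult_ac)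
  also have "\<dots> = t^(k+1)"
    by (simp only: power_three_split t_eq power_mult_distrib)
  finally show "smotz_g k * fps_X^(k+2) = t^(k+1)" .
qed

theorem mainTheorem1:
  fixes t :: "rat fps"
  assumes "fps_nth t 0 = 0"
    and "fps_X ^ 3 = t * (1 - t)^2"
  shows "\<forall>k. smotz_f k = t ^ k / (fps_X ^ k * (1 - t))
            \<and> smotz_g k = t ^ (k + 1) / fps_X ^ (k + 2)"
proof
  fix k
  obtain s where s: "s * (1 - t)^2 = 1" "t = fps_X^3 * s"
    using fps_X_cube_quotient_exists[OF assms] .
  have "fps_nth (1 - t) 0 = 1"
    using assms(1) by simp
  then have "fps_X^k * (1 - t) \<noteq> 0"
    by auto
  then show "smotz_f k = t ^ k / (fps_X ^ k * (1 - t)) \<and> smotz_g k = t ^ (k + 1) / fps_X ^ (k + 2)"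
    unfolding smotz_f_g_mult_denominators[OF s, of k, symmetric] by simp
qed

end
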